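(* Let $H$ be a complex Hilbert space and let $A$ and $B$ be self-adjoint operators in $H$, at least one of which is positive, such that $D(A)=D(B)$ and $D(BA)\subset D(AB)$. Let $T=A+iB$ (with domain $D(A)=D(B)$). If $T^2\subset 0$, then $T\in B(H)$, $T$ is normal, and $T=0$ everywhere on $H$.
   Context: Products are taken on natural domains $D(ST)=\{x\in D(T):Tx\in D(S)\}$ and sums on $D(S+T)=D(S)\cap D(T)$. $S\subset T$ means $D(S)\subset D(T)$ and $S=T$ on $D(S)$; $T^2\subset 0$ means $T^2x=0$ for all $x\in D(T^2)$, where $0$ is the zero operator on $H$. A self-adjoint $A$ is positive if $\langle Ax,x\rangle\geq 0$ for all $x\in D(A)$. $B(H)$ is the algebra of everywhere defined bounded operators on $H$; a closed densely defined $T$ is normal if $TT^*=T^*T$. *)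

theory Defs
  imports "HOL-Analysis.Analysis"
begin

text \<open>A complex Hilbert space structure on a real Banach space type 'a:
  a complex scalar multiplication sc extending the real one, and an inner
  product ip (linear in the first, conjugate linear in the second argument)
  inducing the given norm (hence the given topology; completeness from banach).\<close>

definition complex_hilbert :: "(complex \<Rightarrow> 'a::banach \<Rightarrow> 'a) \<Rightarrow> ('a \<Rightarrow> 'a \<Rightarrow> complex) \<Rightarrow> bool" where
  "complex_hilbert sc ip \<longleftrightarrow>
     (\<forall>r x. sc (complex_of_real r) x = scaleR r x) \<and>
     (\<forall>a x y. sc a (x + y) = sc a x + sc a y) \<and>
     (\<forall>a b x. sc (a + b) x = sc a x + sc b x) \<and>
     (\<forall>a b x. sc (a * b) x = sc a (sc b x)) \<and>
     (\<forall>x y z. ip (x + y) z = ip x z + ip y z) \<and>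
     (\<forall>a x y. ip (sc a x) y = a * ip x y) \<and>
     (\<forall>x y. ip y x = cnj (ip x y)) \<and>
     (\<forall>x. ip x x = complex_of_real ((norm x)\<^sup>2))"

type_synonym 'a opr = "'a set \<times> ('a \<Rightarrow> 'a)"

definition dom_op :: "'a opr \<Rightarrow> 'a set" where "dom_op T = fst T"
definition app_op :: "'a opr \<Rightarrow> 'a \<Rightarrow> 'a" where "app_op T = snd T"

definition comp_op :: "'a opr \<Rightarrow> 'a opr \<Rightarrow> 'a opr" where
  "comp_op S T = ({x \<in> dom_op T. app_op T x \<in> dom_op S}, \<lambda>x. app_op S (app_op T x))"

definition op_sub :: "'a opr \<Rightarrow> 'a opr \<Rightarrow> bool" where
  "op_sub S T \<longleftrightarrow> dom_op S \<subseteq> dom_op T \<and> (\<forall>x\<in>dom_op S. app_op S x = app_op T x)"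

definition op_eq :: "'a opr \<Rightarrow> 'a opr \<Rightarrow> bool" where
  "op_eq S T \<longleftrightarrow> op_sub S T \<and> op_sub T S"

definition densely_defined :: "'a::topological_space opr \<Rightarrow> bool" where
  "densely_defined T \<longleftrightarrow> closure (dom_op T) = UNIV"

definition closed_op :: "'a::topological_space opr \<Rightarrow> bool" where
  "closed_op T \<longleftrightarrow> closed {(x, app_op T x) | x. x \<in> dom_op T}"

text \<open>Hilbert adjoint (meaningful for densely defined T).\<close>
definition adjoint_op :: "('a \<Rightarrow> 'a \<Rightarrow> complex) \<Rightarrow> 'a opr \<Rightarrow> 'a opr" where
  "adjoint_op ip T =
    ({y. \<exists>z. \<forall>x\<in>dom_op T. ip (app_op T x) y = ip x z},
     \<lambda>y. THE z. \<forall>x\<in>dom_op T. ip (app_op T x) y = ip x z)"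

definition self_adjoint :: "('a::topological_space \<Rightarrow> 'a \<Rightarrow> complex) \<Rightarrow> 'a opr \<Rightarrow> bool" where
  "self_adjoint ip A \<longleftrightarrow> densely_defined A \<and> op_eq A (adjoint_op ip A)"

definition positive_op :: "('a::topological_space \<Rightarrow> 'a \<Rightarrow> complex) \<Rightarrow> 'a opr \<Rightarrow> bool" where
  "positive_op ip A \<longleftrightarrow> self_adjoint ip A \<and>
     (\<forall>x\<in>dom_op A. Im (ip (app_op A x) x) = 0 \<and> Re (ip (app_op A x) x) \<ge> 0)"

definition normal_op :: "('a::topological_space \<Rightarrow> 'a \<Rightarrow> complex) \<Rightarrow> 'a opr \<Rightarrow> bool" where
  "normal_op ip T \<longleftrightarrow> closed_op T \<and> densely_defined T \<and>
     op_eq (comp_op T (adjoint_op ip T)) (comp_op (adjoint_op ip T) T)"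

definition bounded_everywhere :: "'a::real_normed_vector opr \<Rightarrow> bool" where
  "bounded_everywhere T \<longleftrightarrow> dom_op T = UNIV \<and> (\<exists>C. \<forall>x. norm (app_op T x) \<le> C * norm x)"

end

(* For x in D(A^2) = D(BA), which lies in D(AB), the vector y = Tx is in D(T) and Ty = T^2 x = 0.
   Now Ty = 0 forces Ay = By = 0: the numbers <Ay,y> = -i <By,y> are both real, hence zero, and
   the positive one of A, B then annihilates y.  Therefore
   |Tx|^2 = <Ax,y> + i <Bx,y> = <x,Ay> + i <x,By> = 0, and again Ax = Bx = 0.
   So A vanishes on D(A^2).  As A is self-adjoint, A - i maps D(A) onto H (its range is closed
   and has trivial orthogonal complement), so every y in D(A) is (A - i)x with Ax = y + ix in
   D(A); hence Ax = 0, y = -ix and Ay = 0.  A self-adjoint operator vanishing on its domain is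
   the everywhere defined zero operator, so D(A^2) = H and T = 0. *)

theory Submission
  imports Defs
begin

lemma quadratic_nonneg_imp_linear_coeff_zero:
  fixes p q :: real
  assumes nonneg: "\<And>t. 0 \<le> 2 * t * p + t\<^sup>2 * q" and "0 \<le> q"
  shows "p = 0"
proof -
  define t where "t = - p / (q + 1)"
  have q1: "q + 1 > 0" using \<open>0 \<le> q\<close> by simp
  have tq: "t * (q + 1) = - p" unfolding t_def using q1 by simp
  have "0 \<le> (2 * t * p + t\<^sup>2 * q) * (q + 1)\<^sup>2" using nonneg[of t] by simp
  also have "\<dots> = 2 * p * (q + 1) * (t * (q + 1)) + q * (t * (q + 1))\<^sup>2"
    by (simp add: algebra_simps power2_eq_square)
  also have "\<dots> = - (p\<^sup>2 * (q + 2))" unfolding tq by (simp add: algebra_simps power2_eq_square)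
  finally have "p\<^sup>2 * (q + 2) \<le> 0" by simp
  with \<open>0 \<le> q\<close> have "p\<^sup>2 \<le> 0" by (simp add: mult_le_0_iff)
  then show ?thesis by simp
qed

lemma infdist_minimizing_sequence:
  fixes M :: "'a::metric_space set"
  assumes "M \<noteq> {}"
  obtains r where "\<And>n. r n \<in> M" and "(\<lambda>n. dist z (r n)) \<longlonglongrightarrow> infdist z M"
proof -
  have "\<exists>r\<in>M. dist z r < infdist z M + inverse (real (Suc n))" for n
    using cINF_less_iff[of M "dist z" "infdist z M + inverse (real (Suc n))"] assms
    by (simp add: infdist_notempty)
  then obtain r where r: "\<And>n. r n \<in> M"
    and r_close: "\<And>n. dist z (r n) < infdist z M + inverse (real (Suc n))"
    by metis
  have "(\<lambda>n. dist z (r n)) \<longlonglongrightarrow> infdist z M"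
  proof (rule real_tendsto_sandwich[OF _ _ tendsto_const LIMSEQ_inverse_real_of_nat_add])
    show "\<forall>\<^sub>F n in sequentially. infdist z M \<le> dist z (r n)"
      by (intro always_eventually allI infdist_le r)
    show "\<forall>\<^sub>F n in sequentially. dist z (r n) \<le> infdist z M + inverse (real (Suc n))"
      by (intro always_eventually allI less_imp_le r_close)
  qed
  with r show ?thesis
    using that by blast
qed

lemma dom_op_pair [simp]: "dom_op (D, f) = D"
  by (simp add: dom_op_def)

lemma app_op_pair [simp]: "app_op (D, f) = f"
  by (simp add: app_op_def)

lemma dom_op_comp_op [simp]: "dom_op (comp_op S T) = {x \<in> dom_op T. app_op T x \<in> dom_op S}"
  by (simp add: comp_op_def)

lemma app_op_comp_op [simp]: "app_op (comp_op S T) x = app_op S (app_op T x)"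
  by (simp add: comp_op_def)

section \<open>Complex Hilbert spaces\<close>

locale hilbert_space =
  fixes sc :: "complex \<Rightarrow> 'a::banach \<Rightarrow> 'a" and ip :: "'a \<Rightarrow> 'a \<Rightarrow> complex"
  assumes complex_hilbert: "complex_hilbert sc ip"
begin

lemma sc_of_real: "sc (complex_of_real r) x = r *\<^sub>R x"
  and sc_add_right: "sc a (x + y) = sc a x + sc a y"
  and sc_sc: "sc (a * b) x = sc a (sc b x)"
  and ip_add_left: "ip (x + y) z = ip x z + ip y z"
  and ip_sc_left: "ip (sc a x) y = a * ip x y"
  and ip_commute: "ip y x = cnj (ip x y)"
  and ip_self: "ip x x = complex_of_real ((norm x)\<^sup>2)"
  using complex_hilbert unfolding complex_hilbert_def by blast+

lemma ip_add_right: "ip x (y + z) = ip x y + ip x z"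
  by (metis ip_commute ip_add_left complex_cnj_add)

lemma ip_sc_right: "ip x (sc a y) = cnj a * ip x y"
  by (metis ip_commute ip_sc_left complex_cnj_mult)

lemma ip_zero_left [simp]: "ip 0 y = 0"
  using ip_add_left[of 0 0 y] by simp

lemma ip_zero_right [simp]: "ip x 0 = 0"
  by (metis ip_commute ip_zero_left complex_cnj_zero)

lemma ip_minus_left: "ip (- x) y = - ip x y"
  using ip_add_left[of x "- x" y] by (simp add: eq_neg_iff_add_eq_0 add.commute)

lemma ip_minus_right: "ip x (- y) = - ip x y"
  by (metis ip_commute ip_minus_left complex_cnj_minus)

lemma ip_diff_left: "ip (x - y) z = ip x z - ip y z"
  using ip_add_left[of x "- y" z] ip_minus_left by simp

lemma ip_diff_right: "ip x (y - z) = ip x y - ip x z"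
  using ip_add_right[of x y "- z"] ip_minus_right by simp

lemma ip_scaleR_left: "ip (r *\<^sub>R x) y = complex_of_real r * ip x y"
  by (metis sc_of_real ip_sc_left)

lemma ip_scaleR_right: "ip x (r *\<^sub>R y) = complex_of_real r * ip x y"
  by (metis sc_of_real ip_sc_right complex_cnj_complex_of_real)

lemma ip_self_eq_zero [simp]: "ip x x = 0 \<longleftrightarrow> x = 0"
  by (simp add: ip_self)

lemma Re_ip_sc_i_right: "Re (ip x (sc \<i> y)) = Im (ip x y)"
  by (simp add: ip_sc_right)

lemma sc_zero_right [simp]: "sc a 0 = 0"
  using sc_add_right[of a 0 0] by simp

lemma sc_minus_one: "sc (- 1) x = - x"
  using sc_of_real[of "- 1" x] by simp

lemma sc_minus_left: "sc (- a) x = - sc a x"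
  using sc_sc[of "- 1" a x] sc_minus_one by simp

lemma sc_minus_right: "sc a (- x) = - sc a x"
  using sc_add_right[of a x "- x"] by (simp add: eq_neg_iff_add_eq_0 add.commute)

lemma sc_diff_right: "sc a (x - y) = sc a x - sc a y"
  using sc_add_right[of a x "- y"] sc_minus_right by simp

lemma sc_commute: "sc a (sc b x) = sc b (sc a x)"
  by (metis sc_sc mult.commute)

lemma power2_norm_eq_Re_ip: "(norm x)\<^sup>2 = Re (ip x x)"
  by (simp add: ip_self)

lemma power2_norm_add: "(norm (x + y))\<^sup>2 = (norm x)\<^sup>2 + (norm y)\<^sup>2 + 2 * Re (ip x y)"
proof -
  have "ip (x + y) (x + y) = ip x x + ip y y + ip x y + ip y x"
    by (simp add: ip_add_left ip_add_right)
  then show ?thesis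
    using ip_commute[of x y] by (simp add: power2_norm_eq_Re_ip)
qed

lemma parallelogram_law:
  fixes x y :: 'a
  shows "(norm (x + y))\<^sup>2 + (norm (x - y))\<^sup>2 = 2 * (norm x)\<^sup>2 + 2 * (norm y)\<^sup>2"
  using power2_norm_add[of x y] power2_norm_add[of x "- y"] ip_minus_right[of x y] by simp

lemma Re_ip_polarization: "Re (ip x y) = ((norm (x + y))\<^sup>2 - (norm (x - y))\<^sup>2) / 4"
  using power2_norm_add[of x y] power2_norm_add[of x "- y"] ip_minus_right[of x y] by simp

lemma norm_sc: "norm (sc a x) = cmod a * norm x"
proof -
  have "ip (sc a x) (sc a x) = (a * cnj a) * ip x x"
    by (simp add: ip_sc_left ip_sc_right)
  also have "\<dots> = complex_of_real ((cmod a * norm x)\<^sup>2)"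
    by (simp add: ip_self complex_norm_square[symmetric] power_mult_distrib)
  finally have "(norm (sc a x))\<^sup>2 = (cmod a * norm x)\<^sup>2"
    by (simp add: power2_norm_eq_Re_ip)
  then show ?thesis
    by simp
qed

lemma bounded_linear_sc: "bounded_linear (sc a)"
  by (rule bounded_linear_intro[where K = "cmod a"])
     (auto simp: sc_add_right norm_sc sc_of_real[symmetric] sc_commute)

lemma tendsto_ip:
  assumes f: "(f \<longlongrightarrow> x) F" and g: "(g \<longlongrightarrow> y) F"
  shows "((\<lambda>n. ip (f n) (g n)) \<longlongrightarrow> ip x y) F"
proof -
  have ig: "((\<lambda>n. sc \<i> (g n)) \<longlongrightarrow> sc \<i> y) F"
    using bounded_linear.tendsto[OF bounded_linear_sc g] .
  have "((\<lambda>n. ((norm (f n + g n))\<^sup>2 - (norm (f n - g n))\<^sup>2) / 4) \<longlongrightarrow>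
        ((norm (x + y))\<^sup>2 - (norm (x - y))\<^sup>2) / 4) F"
    by (intro tendsto_intros f g) simp
  then have "((\<lambda>n. Re (ip (f n) (g n))) \<longlongrightarrow> Re (ip x y)) F"
    by (simp add: Re_ip_polarization)
  moreover have "((\<lambda>n. ((norm (f n + sc \<i> (g n)))\<^sup>2 - (norm (f n - sc \<i> (g n)))\<^sup>2) / 4) \<longlongrightarrow>
        ((norm (x + sc \<i> y))\<^sup>2 - (norm (x - sc \<i> y))\<^sup>2) / 4) F"
    by (intro tendsto_intros f ig) simp
  then have "((\<lambda>n. Im (ip (f n) (g n))) \<longlongrightarrow> Im (ip x y)) F"
    by (simp add: Re_ip_polarization[symmetric] Re_ip_sc_i_right)
  ultimately show ?thesis
    by (simp add: tendsto_complex_iff)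
qed

lemma orthogonal_to_dense_eq_zero:
  assumes dense: "closure D = UNIV" and orth: "\<And>w. w \<in> D \<Longrightarrow> ip v w = 0"
  shows "v = 0"
proof -
  obtain w where w: "\<And>n. w n \<in> D" and lim: "w \<longlonglongrightarrow> v"
    using closure_sequential[of v D] dense by auto
  have "(\<lambda>n. ip v (w n)) \<longlonglongrightarrow> ip v v"
    using tendsto_ip[OF tendsto_const lim] .
  moreover have "(\<lambda>n. ip v (w n)) = (\<lambda>n. 0)"
    using orth w by auto
  ultimately have "ip v v = 0"
    using LIMSEQ_unique tendsto_const by metis
  then show ?thesis by simp
qed

section \<open>Closest points and orthogonal complements\<close>

definition complex_subspace :: "'a set \<Rightarrow> bool" where
  "complex_subspace M \<longleftrightarrow>
     0 \<in> M \<and> (\<forall>x\<in>M. \<forall>y\<in>M. x + y \<in> M) \<and> (\<forall>c. \<forall>x\<in>M. sc c x \<in> M)"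

lemma complex_subspace_scaleR:
  assumes "complex_subspace M" and "x \<in> M"
  shows "r *\<^sub>R x \<in> M"
  using assms sc_of_real[of r x] unfolding complex_subspace_def by metis

lemma complex_subspace_imp_convex: "complex_subspace M \<Longrightarrow> convex M"
  unfolding convex_def using complex_subspace_scaleR
  by (simp add: complex_subspace_def)

lemma convex_minimizing_sequence_Cauchy:
  fixes M :: "'a set"
  assumes "convex M" and r: "\<And>n. r n \<in> M"
    and dist_lim: "(\<lambda>n. dist z (r n)) \<longlonglongrightarrow> infdist z M"
  shows "Cauchy r"
proof (rule CauchyI)
  fix e :: real
  assume "0 < e"
  define d where "d = infdist z M"
  \<comment> \<open>parallelogram law at the midpoint, which lies in \<open>M\<close> by convexity\<close>
  have chord: "(norm (r m - r n))\<^sup>2 \<le> 2 * (dist z (r m))\<^sup>2 + 2 * (dist z (r n))\<^sup>2 - 4 * d\<^sup>2" for m n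
  proof -
    have "(1/2) *\<^sub>R r m + (1/2) *\<^sub>R r n \<in> M"
      by (rule convexD[OF \<open>convex M\<close> r r]) auto
    then have "2 * d \<le> 2 * dist z ((1/2) *\<^sub>R r m + (1/2) *\<^sub>R r n)"
      using infdist_le by (simp add: d_def)
    also have "\<dots> = norm (2 *\<^sub>R (z - ((1/2) *\<^sub>R r m + (1/2) *\<^sub>R r n)))"
      by (simp add: dist_norm)
    also have "2 *\<^sub>R (z - ((1/2) *\<^sub>R r m + (1/2) *\<^sub>R r n)) = (z - r m) + (z - r n)"
      by (simp add: algebra_simps scaleR_2)
    finally have "(2 * d)\<^sup>2 \<le> (norm ((z - r m) + (z - r n)))\<^sup>2"
      by (rule power_mono) (simp add: d_def infdist_nonneg)
    then show ?thesis
      using parallelogram_law[of "z - r m" "z - r n"]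
      by (simp add: dist_norm norm_minus_commute power_mult_distrib)
  qed
  have "(\<lambda>n. (dist z (r n))\<^sup>2) \<longlonglongrightarrow> d\<^sup>2"
    unfolding d_def by (intro tendsto_intros dist_lim)
  moreover have "d\<^sup>2 < d\<^sup>2 + e\<^sup>2 / 4"
    using \<open>0 < e\<close> by simp
  ultimately obtain N where N: "\<And>n. n \<ge> N \<Longrightarrow> (dist z (r n))\<^sup>2 < d\<^sup>2 + e\<^sup>2 / 4"
    by (metis (no_types, lifting) eventually_sequentially order_tendstoD(2))
  have "norm (r m - r n) < e" if "m \<ge> N" "n \<ge> N" for m n
  proof -
    have "(norm (r m - r n))\<^sup>2 < e\<^sup>2"
      using chord[of m n] N[OF \<open>m \<ge> N\<close>] N[OF \<open>n \<ge> N\<close>] by simp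
    then show ?thesis
      using \<open>0 < e\<close> power2_less_imp_less by fastforce
  qed
  then show "\<exists>N. \<forall>m\<ge>N. \<forall>n\<ge>N. norm (r m - r n) < e"
    by blast
qed

lemma closest_point_exists:
  fixes M :: "'a set"
  assumes "closed M" and "convex M" and "M \<noteq> {}"
  obtains m where "m \<in> M" and "\<And>m'. m' \<in> M \<Longrightarrow> dist z m \<le> dist z m'"
proof -
  obtain r where r: "\<And>n. r n \<in> M" and dist_lim: "(\<lambda>n. dist z (r n)) \<longlonglongrightarrow> infdist z M"
    using infdist_minimizing_sequence \<open>M \<noteq> {}\<close> by blast
  then have "Cauchy r"
    using convex_minimizing_sequence_Cauchy \<open>convex M\<close> by blast
  then obtain m where lim: "r \<longlonglongrightarrow> m"
    using Cauchy_convergent_iff convergent_def by blast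
  have "m \<in> M"
    using closed_sequentially[OF \<open>closed M\<close>] r lim by blast
  moreover have "dist z m = infdist z M"
    using LIMSEQ_unique[OF tendsto_dist[OF tendsto_const lim] dist_lim] .
  ultimately show ?thesis
    using that[of m] infdist_le[of _ M z] by simp
qed

lemma closest_point_orthogonal:
  assumes M: "complex_subspace M" and "m \<in> M"
    and closest: "\<And>m'. m' \<in> M \<Longrightarrow> dist z m \<le> dist z m'" and "w \<in> M"
  shows "ip w (z - m) = 0"
proof -
  define u where "u = z - m"
  have Re_zero: "Re (ip u w) = 0" if "w \<in> M" for w
  proof (rule quadratic_nonneg_imp_linear_coeff_zero)
    fix s :: real
    have "(- s) *\<^sub>R w \<in> M"
      using complex_subspace_scaleR[OF M \<open>w \<in> M\<close>] .
    with M \<open>m \<in> M\<close> have "m + (- s) *\<^sub>R w \<in> M"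
      unfolding complex_subspace_def by blast
    then have "norm u \<le> norm (u + s *\<^sub>R w)"
      using closest[of "m + (- s) *\<^sub>R w"] by (simp add: u_def dist_norm algebra_simps)
    then have "(norm u)\<^sup>2 \<le> (norm (u + s *\<^sub>R w))\<^sup>2"
      by (simp add: power_mono)
    then show "0 \<le> 2 * s * Re (ip u w) + s\<^sup>2 * (norm w)\<^sup>2"
      using power2_norm_add[of u "s *\<^sub>R w"] by (simp add: ip_scaleR_right power_mult_distrib)
  qed simp
  have "sc \<i> w \<in> M"
    using M \<open>w \<in> M\<close> by (simp add: complex_subspace_def)
  then have "Im (ip u w) = 0"
    using Re_zero Re_ip_sc_i_right by metis
  with Re_zero[OF \<open>w \<in> M\<close>] have "ip u w = 0"
    by (simp add: complex_eqI)
  then show ?thesis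
    by (metis ip_commute complex_cnj_zero u_def)
qed

lemma closed_subspace_eq_UNIV:
  assumes M: "complex_subspace M" and "closed M"
    and orth: "\<And>z. (\<forall>m\<in>M. ip m z = 0) \<Longrightarrow> z = 0"
  shows "M = UNIV"
proof -
  have "z \<in> M" for z
  proof -
    have "M \<noteq> {}"
      using M by (auto simp: complex_subspace_def)
    then obtain m where "m \<in> M" and "\<And>m'. m' \<in> M \<Longrightarrow> dist z m \<le> dist z m'"
      using closest_point_exists \<open>closed M\<close> complex_subspace_imp_convex[OF M] by metis
    then have "z - m = 0"
      using orth closest_point_orthogonal[OF M] by blast
    with \<open>m \<in> M\<close> show ?thesis by simp
  qed
  then show ?thesis by blast
qed

section \<open>Self-adjoint and positive operators\<close>

lemma adjoint_opI:
  assumes dense: "densely_defined T"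
    and adj: "\<And>x. x \<in> dom_op T \<Longrightarrow> ip (app_op T x) y = ip x z"
  shows "y \<in> dom_op (adjoint_op ip T)" and "app_op (adjoint_op ip T) y = z"
proof -
  show "y \<in> dom_op (adjoint_op ip T)"
    using adj by (auto simp: adjoint_op_def)
  have unique: "z' = z" if adj': "\<forall>x\<in>dom_op T. ip (app_op T x) y = ip x z'" for z'
  proof -
    have "ip (z' - z) x = 0" if "x \<in> dom_op T" for x
      using adj[OF that] adj' that ip_commute[of x "z' - z"] by (simp add: ip_diff_right)
    then show ?thesis
      using orthogonal_to_dense_eq_zero[of "dom_op T" "z' - z"] dense
      by (simp add: densely_defined_def)
  qed
  show "app_op (adjoint_op ip T) y = z"
    unfolding adjoint_op_def app_op_pair
    by (rule the_equality) (use adj unique in auto)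
qed

lemma self_adjoint_adjointD:
  assumes sa: "self_adjoint ip A"
    and adj: "\<And>x. x \<in> dom_op A \<Longrightarrow> ip (app_op A x) y = ip x z"
  shows "y \<in> dom_op A" and "app_op A y = z"
proof -
  have "densely_defined A" and "op_sub (adjoint_op ip A) A"
    using sa by (simp_all add: self_adjoint_def op_eq_def)
  then show "y \<in> dom_op A" and "app_op A y = z"
    using adjoint_opI[of A y z] adj unfolding op_sub_def by auto
qed

lemma self_adjoint_symmetric:
  assumes sa: "self_adjoint ip A" and "x \<in> dom_op A" and "y \<in> dom_op A"
  shows "ip (app_op A x) y = ip x (app_op A y)"
proof -
  have "densely_defined A" and sub: "op_sub A (adjoint_op ip A)"
    using sa by (simp_all add: self_adjoint_def op_eq_def)
  then have "y \<in> dom_op (adjoint_op ip A)" and A_y: "app_op A y = app_op (adjoint_op ip A) y"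
    using \<open>y \<in> dom_op A\<close> unfolding op_sub_def by auto
  then obtain z where z: "\<forall>x\<in>dom_op A. ip (app_op A x) y = ip x z"
    by (auto simp: adjoint_op_def)
  with \<open>densely_defined A\<close> have "app_op A y = z"
    using adjoint_opI(2)[of A y z] A_y by simp
  with z \<open>x \<in> dom_op A\<close> show ?thesis by simp
qed

lemma self_adjoint_add:
  assumes sa: "self_adjoint ip A" and x: "x \<in> dom_op A" and y: "y \<in> dom_op A"
  shows "x + y \<in> dom_op A" and "app_op A (x + y) = app_op A x + app_op A y"
  using self_adjoint_adjointD[OF sa, of "x + y" "app_op A x + app_op A y"]
    self_adjoint_symmetric[OF sa _ x] self_adjoint_symmetric[OF sa _ y]
  by (simp_all add: ip_add_right)

lemma self_adjoint_sc:
  assumes sa: "self_adjoint ip A" and x: "x \<in> dom_op A"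
  shows "sc c x \<in> dom_op A" and "app_op A (sc c x) = sc c (app_op A x)"
  using self_adjoint_adjointD[OF sa, of "sc c x" "sc c (app_op A x)"]
    self_adjoint_symmetric[OF sa _ x]
  by (simp_all add: ip_sc_right)

lemma self_adjoint_diff:
  assumes sa: "self_adjoint ip A" and x: "x \<in> dom_op A" and y: "y \<in> dom_op A"
  shows "x - y \<in> dom_op A" and "app_op A (x - y) = app_op A x - app_op A y"
  using self_adjoint_add[OF sa x self_adjoint_sc(1)[OF sa y, of "- 1"]]
    self_adjoint_sc(2)[OF sa y, of "- 1"]
  by (simp_all add: sc_minus_one)

lemma self_adjoint_Im_form:
  assumes "self_adjoint ip A" and "x \<in> dom_op A"
  shows "Im (ip (app_op A x) x) = 0"
  using self_adjoint_symmetric[OF assms assms(2)] ip_commute[of x "app_op A x"]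
  by (metis Reals_cnj_iff complex_is_Real_iff)

lemma self_adjoint_graph_closed:
  assumes sa: "self_adjoint ip A" and xs: "\<And>n. xs n \<in> dom_op A"
    and lim: "xs \<longlonglongrightarrow> x" and lim_A: "(\<lambda>n. app_op A (xs n)) \<longlonglongrightarrow> w"
  shows "x \<in> dom_op A" and "app_op A x = w"
proof -
  have "ip (app_op A u) x = ip u w" if "u \<in> dom_op A" for u
  proof (rule LIMSEQ_unique)
    show "(\<lambda>n. ip (app_op A u) (xs n)) \<longlonglongrightarrow> ip (app_op A u) x"
      using tendsto_ip[OF tendsto_const lim] .
    show "(\<lambda>n. ip (app_op A u) (xs n)) \<longlonglongrightarrow> ip u w"
      using tendsto_ip[OF tendsto_const lim_A] self_adjoint_symmetric[OF sa that xs] by simp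
  qed
  then show "x \<in> dom_op A" and "app_op A x = w"
    using self_adjoint_adjointD[OF sa] by blast+
qed

lemma self_adjoint_norm_minus_i:
  assumes "self_adjoint ip A" and "x \<in> dom_op A"
  shows "(norm (app_op A x - sc \<i> x))\<^sup>2 = (norm (app_op A x))\<^sup>2 + (norm x)\<^sup>2"
proof -
  have "Re (ip (app_op A x) (- sc \<i> x)) = 0"
    using self_adjoint_Im_form[OF assms] by (simp add: ip_minus_right ip_sc_right)
  moreover have "norm (- sc \<i> x) = norm x"
    by (simp add: norm_sc)
  ultimately show ?thesis
    using power2_norm_add[of "app_op A x" "- sc \<i> x"] by simp
qed

lemma self_adjoint_minus_i_range_closed:
  assumes sa: "self_adjoint ip A"
  shows "closed ((\<lambda>x. app_op A x - sc \<i> x) ` dom_op A)"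
  unfolding closed_sequential_limits
proof (intro allI impI, elim conjE)
  fix v l
  assume "\<forall>n. v n \<in> (\<lambda>x. app_op A x - sc \<i> x) ` dom_op A" and "v \<longlonglongrightarrow> l"
  then have "\<forall>n. \<exists>x. x \<in> dom_op A \<and> v n = app_op A x - sc \<i> x"
    by blast
  then obtain xs where xs: "\<And>n. xs n \<in> dom_op A"
    and v_eq: "v = (\<lambda>n. app_op A (xs n) - sc \<i> (xs n))"
    by metis
  define g where "g n = (xs n, app_op A (xs n))" for n
  \<comment> \<open>by \<open>|(A - i)u|\<^sup>2 = |Au|\<^sup>2 + |u|\<^sup>2\<close> the graph sequence is isometric to \<open>v\<close>, hence Cauchy\<close>
  have "dist (g m) (g n) = dist (v m) (v n)" for m n
  proof -
    have "(norm (xs m - xs n))\<^sup>2 + (norm (app_op A (xs m) - app_op A (xs n)))\<^sup>2 =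
        (norm (v m - v n))\<^sup>2"
      using self_adjoint_norm_minus_i[OF sa self_adjoint_diff(1)[OF sa xs xs]]
        self_adjoint_diff(2)[OF sa xs xs]
      by (simp add: v_eq sc_diff_right algebra_simps)
    then show ?thesis
      by (simp add: g_def dist_norm norm_Pair)
  qed
  then have "Cauchy g"
    using LIMSEQ_imp_Cauchy[OF \<open>v \<longlonglongrightarrow> l\<close>] by (simp add: Cauchy_def)
  then obtain x w where lim: "g \<longlonglongrightarrow> (x, w)"
    using Cauchy_convergent_iff convergent_def by (metis surj_pair)
  have x_lim: "xs \<longlonglongrightarrow> x" and Ax_lim: "(\<lambda>n. app_op A (xs n)) \<longlonglongrightarrow> w"
    using tendsto_fst[OF lim] tendsto_snd[OF lim] by (simp_all add: g_def)
  note graph = self_adjoint_graph_closed[OF sa xs x_lim Ax_lim]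
  have "v \<longlonglongrightarrow> app_op A x - sc \<i> x"
    unfolding v_eq graph(2)
    by (intro tendsto_diff Ax_lim bounded_linear.tendsto[OF bounded_linear_sc x_lim])
  then have "l = app_op A x - sc \<i> x"
    using \<open>v \<longlonglongrightarrow> l\<close> LIMSEQ_unique by blast
  with graph(1) show "l \<in> (\<lambda>x. app_op A x - sc \<i> x) ` dom_op A"
    by blast
qed

text \<open>A vector orthogonal to the range of \<open>A - i\<close> would be an eigenvector of \<open>A\<close> for \<open>-i\<close>.\<close>

lemma self_adjoint_minus_i_range_orthogonal:
  assumes sa: "self_adjoint ip A"
    and orth: "\<And>x. x \<in> dom_op A \<Longrightarrow> ip (app_op A x - sc \<i> x) z = 0"
  shows "z = 0"
proof -
  have "ip (app_op A x) z = ip x (sc (- \<i>) z)" if "x \<in> dom_op A" for x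
    using orth[OF that] by (simp add: ip_diff_left ip_sc_left ip_sc_right)
  then have z: "z \<in> dom_op A" and A_z: "app_op A z = sc (- \<i>) z"
    using self_adjoint_adjointD[OF sa] by blast+
  have "Re (ip z z) = 0"
    using self_adjoint_Im_form[OF sa z] by (simp add: A_z ip_sc_left)
  then show "z = 0"
    by (simp add: ip_self)
qed

lemma self_adjoint_minus_i_surj:
  assumes sa: "self_adjoint ip A"
  obtains x where "x \<in> dom_op A" and "app_op A x - sc \<i> x = y"
proof -
  define f where "f x = app_op A x - sc \<i> x" for x
  have "complex_subspace (f ` dom_op A)"
    unfolding complex_subspace_def
  proof (intro conjI ballI allI)
    have "0 \<in> dom_op A" and "app_op A 0 = 0"
      using self_adjoint_adjointD[OF sa, of 0 0] by simp_all
    then show "0 \<in> f ` dom_op A"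
      by (metis f_def diff_zero image_eqI sc_zero_right)
  next
    fix u v
    assume "u \<in> f ` dom_op A" and "v \<in> f ` dom_op A"
    then obtain x y where x: "x \<in> dom_op A" and y: "y \<in> dom_op A" and "u = f x" and "v = f y"
      by blast
    then have "u + v = f (x + y)"
      by (simp add: f_def self_adjoint_add(2)[OF sa x y] sc_add_right)
    with self_adjoint_add(1)[OF sa x y] show "u + v \<in> f ` dom_op A"
      by blast
  next
    fix c u
    assume "u \<in> f ` dom_op A"
    then obtain x where x: "x \<in> dom_op A" and "u = f x"
      by blast
    then have "sc c u = f (sc c x)"
      by (simp add: f_def self_adjoint_sc(2)[OF sa x] sc_diff_right sc_commute)
    with self_adjoint_sc(1)[OF sa x] show "sc c u \<in> f ` dom_op A"
      by blast
  qed
  moreover have "closed (f ` dom_op A)"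
    unfolding f_def using self_adjoint_minus_i_range_closed[OF sa] .
  moreover have "z = 0" if "\<forall>m\<in>f ` dom_op A. ip m z = 0" for z
    using self_adjoint_minus_i_range_orthogonal[OF sa] that unfolding f_def by blast
  ultimately have "f ` dom_op A = UNIV"
    by (rule closed_subspace_eq_UNIV)
  then obtain x where "x \<in> dom_op A" and "y = f x"
    by (metis UNIV_I imageE)
  then show ?thesis
    using that by (simp add: f_def)
qed

lemma positive_op_form_eq_zero:
  assumes pos: "positive_op ip P" and y: "y \<in> dom_op P" and form_zero: "ip (app_op P y) y = 0"
  shows "app_op P y = 0"
proof -
  have sa: "self_adjoint ip P"
    using pos by (simp add: positive_op_def)
  have nonneg: "0 \<le> Re (ip (app_op P x) x)" if "x \<in> dom_op P" for x
    using pos that by (simp add: positive_op_def)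
  \<comment> \<open>the nonnegative form vanishes at \<open>y\<close>, so its derivative at \<open>y\<close> vanishes in every direction\<close>
  have Re_zero: "Re (ip (app_op P y) w) = 0" if w: "w \<in> dom_op P" for w
  proof (rule quadratic_nonneg_imp_linear_coeff_zero)
    fix t :: real
    have tw: "t *\<^sub>R w \<in> dom_op P" "app_op P (t *\<^sub>R w) = t *\<^sub>R app_op P w"
      using self_adjoint_sc[OF sa w, of "complex_of_real t"] by (simp_all add: sc_of_real)
    have "ip (app_op P w) y = cnj (ip (app_op P y) w)"
      using self_adjoint_symmetric[OF sa w y] ip_commute by metis
    moreover have "ip (app_op P (y + t *\<^sub>R w)) (y + t *\<^sub>R w) =
        ip (app_op P y) y + complex_of_real t * (ip (app_op P y) w + ip (app_op P w) y)
        + complex_of_real (t\<^sup>2) * ip (app_op P w) w"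
      using self_adjoint_add(2)[OF sa y tw(1)] tw(2)
      by (simp add: ip_add_left ip_add_right ip_scaleR_left ip_scaleR_right
          power2_eq_square algebra_simps)
    ultimately have "Re (ip (app_op P (y + t *\<^sub>R w)) (y + t *\<^sub>R w)) =
        2 * t * Re (ip (app_op P y) w) + t\<^sup>2 * Re (ip (app_op P w) w)"
      using form_zero by (simp add: complex_add_cnj)
    then show "0 \<le> 2 * t * Re (ip (app_op P y) w) + t\<^sup>2 * Re (ip (app_op P w) w)"
      using nonneg[OF self_adjoint_add(1)[OF sa y tw(1)]] by linarith
  qed (use nonneg w in simp)
  have "ip (app_op P y) w = 0" if w: "w \<in> dom_op P" for w
  proof -
    have "Im (ip (app_op P y) w) = 0"
      using Re_zero[OF self_adjoint_sc(1)[OF sa w, of \<i>]] by (simp add: Re_ip_sc_i_right)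
    with Re_zero[OF w] show ?thesis
      by (simp add: complex_eqI)
  qed
  then show ?thesis
    using orthogonal_to_dense_eq_zero[of "dom_op P" "app_op P y"] sa
    by (simp add: self_adjoint_def densely_defined_def)
qed

section \<open>Operators \<open>A + iB\<close> with square zero\<close>

text \<open>\<open>\<langle>Ay, y\<rangle> = -i \<langle>By, y\<rangle>\<close> with both sides real, so both forms vanish.\<close>

lemma self_adjoint_add_i_eq_zero:
  assumes sa_A: "self_adjoint ip A" and sa_B: "self_adjoint ip B"
    and pos: "positive_op ip A \<or> positive_op ip B"
    and yA: "y \<in> dom_op A" and yB: "y \<in> dom_op B"
    and zero: "app_op A y + sc \<i> (app_op B y) = 0"
  shows "app_op A y = 0 \<and> app_op B y = 0"
proof -
  have A_y: "app_op A y = sc (- \<i>) (app_op B y)"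
    using zero by (simp add: sc_minus_left eq_neg_iff_add_eq_0)
  have "Im (ip (app_op A y) y) = 0" and "Im (ip (app_op B y) y) = 0"
    using self_adjoint_Im_form[OF sa_A yA] self_adjoint_Im_form[OF sa_B yB] .
  then have B_form: "ip (app_op B y) y = 0" and A_form: "ip (app_op A y) y = 0"
    by (simp_all add: A_y ip_sc_left complex_eqI)
  show ?thesis
    using pos
  proof
    assume "positive_op ip A"
    then have "app_op A y = 0"
      using positive_op_form_eq_zero yA A_form by blast
    then have "norm (sc (- \<i>) (app_op B y)) = 0"
      using A_y by simp
    with \<open>app_op A y = 0\<close> show ?thesis
      by (simp add: norm_sc)
  next
    assume "positive_op ip B"
    then have "app_op B y = 0"
      using positive_op_form_eq_zero yB B_form by blast
    then show ?thesis
      using A_y by simp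
  qed
qed

lemma self_adjoint_vanishing_on_dom_square:
  assumes sa: "self_adjoint ip A"
    and vanish: "\<And>x. x \<in> dom_op A \<Longrightarrow> app_op A x \<in> dom_op A \<Longrightarrow> app_op A x = 0"
  shows "dom_op A = UNIV \<and> (\<forall>x. app_op A x = 0)"
proof -
  have zero_on_dom: "app_op A y = 0" if "y \<in> dom_op A" for y
  proof -
    obtain x where x: "x \<in> dom_op A" and y_eq: "app_op A x - sc \<i> x = y"
      using self_adjoint_minus_i_surj[OF sa] by blast
    have "app_op A x = y + sc \<i> x"
      using y_eq by (simp add: algebra_simps)
    moreover have "y + sc \<i> x \<in> dom_op A"
      using self_adjoint_add(1)[OF sa that self_adjoint_sc(1)[OF sa x]] .
    ultimately have "app_op A x = 0"
      using vanish[OF x] by simp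
    moreover have "y = sc (- \<i>) x"
      using y_eq \<open>app_op A x = 0\<close> by (simp add: sc_minus_left)
    ultimately show ?thesis
      using self_adjoint_sc(2)[OF sa x] by simp
  qed
  have "y \<in> dom_op A \<and> app_op A y = 0" for y
    using self_adjoint_adjointD[OF sa, of y 0] zero_on_dom by simp
  then show ?thesis
    by blast
qed

lemma zero_op_bounded_normal:
  assumes dom: "dom_op T = UNIV" and zero: "\<And>x. app_op T x = 0"
  shows "bounded_everywhere T \<and> normal_op ip T"
proof -
  have dense: "densely_defined T"
    using dom by (simp add: densely_defined_def)
  have adj: "y \<in> dom_op (adjoint_op ip T) \<and> app_op (adjoint_op ip T) y = 0" for y
    using adjoint_opI[OF dense, of y 0] zero by simp
  then have adj_dom: "dom_op (adjoint_op ip T) = UNIV"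
    by blast
  have "{(x, app_op T x) | x. x \<in> dom_op T} = UNIV \<times> {0}"
    using dom zero by auto
  then have "closed_op T"
    by (simp add: closed_op_def closed_Times)
  moreover have "op_eq (comp_op T (adjoint_op ip T)) (comp_op (adjoint_op ip T) T)"
    by (simp add: op_eq_def op_sub_def dom adj_dom zero adj)
  ultimately show ?thesis
    using dom zero dense by (auto simp: bounded_everywhere_def normal_op_def intro: exI[of _ 0])
qed

lemma square_zero_vanishes_on_dom_square:
  assumes sa_A: "self_adjoint ip A" and sa_B: "self_adjoint ip B"
    and pos: "positive_op ip A \<or> positive_op ip B"
    and dom_eq: "dom_op A = dom_op B"
    and dom_incl: "dom_op (comp_op B A) \<subseteq> dom_op (comp_op A B)"
    and T_def: "T = (dom_op A, \<lambda>x. app_op A x + sc \<i> (app_op B x))"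
    and T2: "\<forall>x \<in> dom_op (comp_op T T). app_op (comp_op T T) x = 0"
    and x: "x \<in> dom_op A" and Ax: "app_op A x \<in> dom_op A"
  shows "app_op A x = 0 \<and> app_op B x = 0"
proof -
  have xB: "x \<in> dom_op B" and Bx: "app_op B x \<in> dom_op A"
    using x Ax dom_eq dom_incl by auto
  define y where "y = app_op A x + sc \<i> (app_op B x)"
  have yA: "y \<in> dom_op A" and yB: "y \<in> dom_op B"
    using self_adjoint_add(1)[OF sa_A Ax self_adjoint_sc(1)[OF sa_A Bx]] dom_eq
    by (simp_all add: y_def)
  have "app_op A y + sc \<i> (app_op B y) = 0"
    using T2 x yA by (simp add: T_def y_def)
  then have Ay: "app_op A y = 0" and By: "app_op B y = 0"
    using self_adjoint_add_i_eq_zero[OF sa_A sa_B pos yA yB] by simp_all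
  have "ip y y = ip (app_op A x) y + \<i> * ip (app_op B x) y"
    by (simp add: y_def ip_add_left ip_sc_left)
  also have "\<dots> = ip x (app_op A y) + \<i> * ip x (app_op B y)"
    using self_adjoint_symmetric[OF sa_A x yA] self_adjoint_symmetric[OF sa_B xB yB] by simp
  also have "\<dots> = 0"
    by (simp add: Ay By)
  finally have "y = 0"
    by simp
  then show ?thesis
    using self_adjoint_add_i_eq_zero[OF sa_A sa_B pos x xB] by (simp add: y_def)
qed

end

theorem theorem2p8:
  fixes sc :: "complex \<Rightarrow> 'a::banach \<Rightarrow> 'a"
    and ip :: "'a \<Rightarrow> 'a \<Rightarrow> complex"
    and A B T :: "'a opr"
  assumes H: "complex_hilbert sc ip"
    and sa_A: "self_adjoint ip A" and sa_B: "self_adjoint ip B"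
    and pos: "positive_op ip A \<or> positive_op ip B"
    and dom_eq: "dom_op A = dom_op B"
    and dom_incl: "dom_op (comp_op B A) \<subseteq> dom_op (comp_op A B)"
    and T_def: "T = (dom_op A, \<lambda>x. app_op A x + sc \<i> (app_op B x))"
    and T2: "\<forall>x \<in> dom_op (comp_op T T). app_op (comp_op T T) x = 0"
  shows "bounded_everywhere T \<and> normal_op ip T \<and> (\<forall>x. x \<in> dom_op T \<and> app_op T x = 0)"
proof -
  interpret hilbert_space sc ip
    by (fact hilbert_space.intro[OF H])
  have vanish: "app_op A x = 0 \<and> app_op B x = 0"
    if "x \<in> dom_op A" and "app_op A x \<in> dom_op A" for x
    using square_zero_vanishes_on_dom_square[OF sa_A sa_B pos dom_eq dom_incl T_def T2 that] .
  then have "dom_op A = UNIV \<and> (\<forall>x. app_op A x = 0)"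
    by (intro self_adjoint_vanishing_on_dom_square[OF sa_A]) blast
  then have dom_T: "dom_op T = UNIV" and T_zero: "\<And>x. app_op T x = 0"
    using vanish T_def by simp_all
  show ?thesis
    using zero_op_bounded_normal[OF dom_T T_zero] dom_T T_zero by simp
qed

end
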